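(* Let $p$ be a two-phase solution. At every point where $p\neq 0$ (so $\nu_1>0$), $$\begin{aligned} \Sigma_1&=-\tfrac12\tfrac{\nu_2}{\nu_1}+\Lambda_1,\\ \Sigma_2&=-\tfrac14\Lambda_1\tfrac{\nu_2}{\nu_1}-\tfrac14\nu_1+\tfrac{-\frac5{64}\Lambda_1^4+\frac38\Lambda_1^2\Lambda_2-\frac14\Lambda_2^2-\frac12\Lambda_1\Lambda_3+\Lambda_4}{\nu_1}+\tfrac12\Lambda_2+\tfrac18\Lambda_1^2,\\ \Sigma_3&=\tfrac14\nu_2+\big(\tfrac1{16}\Lambda_1^2-\tfrac14\Lambda_2\big)\tfrac{\nu_2}{\nu_1}-\tfrac14\Lambda_1\nu_1+\tfrac{\frac1{64}\Lambda_1^5-\frac18\Lambda_1^3\Lambda_2+\frac18\Lambda_1^2\Lambda_3+\frac14\Lambda_1\Lambda_2^2-\frac12\Lambda_2\Lambda_3+\Lambda_5}{\nu_1}+\tfrac12\Lambda_3,\\ \Sigma_4&=\tfrac18\Lambda_1\nu_2-\tfrac1{16}\tfrac{\nu_2^2}{\nu_1}-\tfrac1{16}\Lambda_1^2\nu_1+\big(-\tfrac1{32}\Lambda_1^3+\tfrac18\Lambda_1\Lambda_2-\tfrac14\Lambda_3\big)\tfrac{\nu_2}{\nu_1}\\ &\quad+\tfrac{-\frac1{256}\Lambda_1^6+\frac1{32}\Lambda_1^4\Lambda_2-\frac1{16}\Lambda_1^3\Lambda_3-\frac1{16}\Lambda_1^2\Lambda_2^2+\frac14\Lambda_1\Lambda_2\Lambda_3-\frac14\Lambda_3^2+\Lambda_6}{\nu_1}+\tfrac1{32}\Lambda_1^4-\tfrac18\Lambda_1^2\Lambda_2+\tfrac14\Lambda_1\Lambda_3.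 \end{aligned}$$
   Context: Let $p(x,t)$, $(x,t)\in\mathbb R^2$, be a smooth complex-valued solution of the focusing nonlinear Schrödinger equation $ip_t+p_{xx}+2|p|^2p=0$; $^*$ denotes complex conjugation and subscripts denote partial derivatives. Put $\mathbb U=\begin{pmatrix}-i\lambda& ip\\ ip^*& i\lambda\end{pmatrix}$ and $\mathbb V=\begin{pmatrix}-2i\lambda^2+i|p|^2& 2i\lambda p-p_x\\ 2i\lambda p^*+p^*_x& 2i\lambda^2-i|p|^2\end{pmatrix}$. The solution $p$ is called a two-phase solution if there exist real constants $c_0,c_1,c_2$ such that the matrix $\Psi=\begin{pmatrix}\Psi_{11}&\Psi_{12}\\ \Psi_{21}&-\Psi_{11}\end{pmatrix}$ with $\Psi_{11}=-i\lambda^3-ic_2\lambda^2+(\tfrac12 i|p|^2-ic_1)\lambda+\tfrac14(pp^*_x-p_xp^* )+\tfrac12 ic_2|p|^2-ic_0$, $\Psi_{12}=ip\lambda^2+(-\tfrac12p_x+ic_2p)\lambda-\tfrac14 ip_{xx}-\tfrac12 ip|p|^2-\tfrac12c_2p_x+ic_1p$, $\Psi_{21}=ip^*\lambda^2+(\tfrac12p^*_x+ic_2p^* )\lambda-\tfrac14 ip^*_{xx}-\tfrac12 ip^*|p|^2+\tfrac12c_2p^*_x+ic_1p^*$ satisfies $\Psi_x=[\mathbb U,\Psi]$ and $\Psi_t=[\mathbb V,\Psi]$ identically in $\lambda\in\mathbb C$. Set $\nu_1=|p|^2$ and $\nu_2=i(p^*p_x-pp^*_x)$ (both real). The polynomial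 $\mathscr R(\lambda)=-\Psi_{11}^2-\Psi_{12}\Psi_{21}$ is monic of degree 6 and independent of $(x,t)$; write $\mathscr R(\lambda)=\prod_{i=1}^6(\lambda-\lambda_i)$ and let $\Lambda_k$ denote the $k$-th elementary symmetric polynomial of $\lambda_1,\dots,\lambda_6$, so $\mathscr R(\lambda)=\sum_{k=0}^6(-1)^k\Lambda_k\lambda^{6-k}$ with $\Lambda_0=1$. At points where $p\neq0$ the Dirichlet eigenvalues $\mu_1,\mu_2$ are defined (up to order) by $\Psi_{12}(\lambda)=ip(\lambda-\mu_1)(\lambda-\mu_2)$, and $\Sigma_1,\dots,\Sigma_4$ denote the elementary symmetric polynomials of $\mu_1,\mu_2,\mu_1^*,\mu_2^*$, i.e. $(\mu-\mu_1)(\mu-\mu_2)(\mu-\mu_1^* )(\mu-\mu_2^* )=\mu^4-\Sigma_1\mu^3+\Sigma_2\mu^2-\Sigma_3\mu+\Sigma_4$. *)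

theory Defs
  imports "HOL-Analysis.Analysis"
begin

text \<open>Functions of (x,t) are modelled as maps real \<times> real \<Rightarrow> complex, the point being (x,t).\<close>

definition px :: "(real \<times> real \<Rightarrow> complex) \<Rightarrow> real \<times> real \<Rightarrow> complex" where
  "px f z = vector_derivative (\<lambda>s. f (s, snd z)) (at (fst z))"

definition pt :: "(real \<times> real \<Rightarrow> complex) \<Rightarrow> real \<times> real \<Rightarrow> complex" where
  "pt f z = vector_derivative (\<lambda>s. f (fst z, s)) (at (snd z))"

fun iter_partial :: "bool list \<Rightarrow> (real \<times> real \<Rightarrow> complex) \<Rightarrow> real \<times> real \<Rightarrow> complex" where
  "iter_partial [] f = f"
| "iter_partial (b # bs) f = (if b then pt else px) (iter_partial bs f)"

definition smooth2 :: "(real \<times> real \<Rightarrow> complex) \<Rightarrow> bool" where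
  "smooth2 f \<longleftrightarrow> (\<forall>bs z. iter_partial bs f differentiable (at z))"

definition mat2 :: "complex \<Rightarrow> complex \<Rightarrow> complex \<Rightarrow> complex \<Rightarrow> complex^2^2" where
  "mat2 a b c d = (\<chi> i j. if i = 1 then (if j = 1 then a else b) else (if j = 1 then c else d))"

definition commut :: "complex^2^2 \<Rightarrow> complex^2^2 \<Rightarrow> complex^2^2" where
  "commut A B = A ** B - B ** A"

definition mpx :: "(real \<times> real \<Rightarrow> complex^2^2) \<Rightarrow> real \<times> real \<Rightarrow> complex^2^2" where
  "mpx M z = (\<chi> i j. px (\<lambda>w. M w $ i $ j) z)"

definition mpt :: "(real \<times> real \<Rightarrow> complex^2^2) \<Rightarrow> real \<times> real \<Rightarrow> complex^2^2" where
  "mpt M z = (\<chi> i j. pt (\<lambda>w. M w $ i $ j) z)"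

definition abs2 :: "complex \<Rightarrow> complex" where
  "abs2 a = complex_of_real ((cmod a)\<^sup>2)"

definition is_NLS :: "(real \<times> real \<Rightarrow> complex) \<Rightarrow> bool" where
  "is_NLS p \<longleftrightarrow> (\<forall>z. \<i> * pt p z + px (px p) z + 2 * abs2 (p z) * p z = 0)"

definition UU :: "(real \<times> real \<Rightarrow> complex) \<Rightarrow> complex \<Rightarrow> real \<times> real \<Rightarrow> complex^2^2" where
  "UU p l z = mat2 (-\<i>*l) (\<i> * p z) (\<i> * cnj (p z)) (\<i>*l)"

definition VV :: "(real \<times> real \<Rightarrow> complex) \<Rightarrow> complex \<Rightarrow> real \<times> real \<Rightarrow> complex^2^2" where
  "VV p l z = mat2 (-2*\<i>*l^2 + \<i> * abs2 (p z)) (2*\<i>*l*p z - px p z)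
                   (2*\<i>*l*cnj (p z) + px (\<lambda>w. cnj (p w)) z) (2*\<i>*l^2 - \<i> * abs2 (p z))"

definition Psi11 :: "(real \<times> real \<Rightarrow> complex) \<Rightarrow> real \<Rightarrow> real \<Rightarrow> real \<Rightarrow> complex \<Rightarrow> real \<times> real \<Rightarrow> complex" where
  "Psi11 p c0 c1 c2 l z = -\<i>*l^3 - \<i>*c2*l^2 + (1/2*\<i>*abs2 (p z) - \<i>*c1)*l
     + 1/4*(p z * px (\<lambda>w. cnj (p w)) z - px p z * cnj (p z)) + 1/2*\<i>*c2*abs2 (p z) - \<i>*c0"

definition Psi12 :: "(real \<times> real \<Rightarrow> complex) \<Rightarrow> real \<Rightarrow> real \<Rightarrow> real \<Rightarrow> complex \<Rightarrow> real \<times> real \<Rightarrow> complex" where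
  "Psi12 p c0 c1 c2 l z = \<i>*p z*l^2 + (-1/2*px p z + \<i>*c2*p z)*l - 1/4*\<i>*px (px p) z
     - 1/2*\<i>*p z*abs2 (p z) - 1/2*c2*px p z + \<i>*c1*p z"

definition Psi21 :: "(real \<times> real \<Rightarrow> complex) \<Rightarrow> real \<Rightarrow> real \<Rightarrow> real \<Rightarrow> complex \<Rightarrow> real \<times> real \<Rightarrow> complex" where
  "Psi21 p c0 c1 c2 l z = \<i>*cnj (p z)*l^2 + (1/2*px (\<lambda>w. cnj (p w)) z + \<i>*c2*cnj (p z))*l
     - 1/4*\<i>*px (px (\<lambda>w. cnj (p w))) z - 1/2*\<i>*cnj (p z)*abs2 (p z)
     + 1/2*c2*px (\<lambda>w. cnj (p w)) z + \<i>*c1*cnj (p z)"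

definition Psi :: "(real \<times> real \<Rightarrow> complex) \<Rightarrow> real \<Rightarrow> real \<Rightarrow> real \<Rightarrow> complex \<Rightarrow> real \<times> real \<Rightarrow> complex^2^2" where
  "Psi p c0 c1 c2 l z = mat2 (Psi11 p c0 c1 c2 l z) (Psi12 p c0 c1 c2 l z)
                             (Psi21 p c0 c1 c2 l z) (- Psi11 p c0 c1 c2 l z)"

definition two_phase_with :: "(real \<times> real \<Rightarrow> complex) \<Rightarrow> real \<Rightarrow> real \<Rightarrow> real \<Rightarrow> bool" where
  "two_phase_with p c0 c1 c2 \<longleftrightarrow>
     (\<forall>l z. mpx (Psi p c0 c1 c2 l) z = commut (UU p l z) (Psi p c0 c1 c2 l z)
          \<and> mpt (Psi p c0 c1 c2 l) z = commut (VV p l z) (Psi p c0 c1 c2 l z))"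

definition RR :: "(real \<times> real \<Rightarrow> complex) \<Rightarrow> real \<Rightarrow> real \<Rightarrow> real \<Rightarrow> complex \<Rightarrow> real \<times> real \<Rightarrow> complex" where
  "RR p c0 c1 c2 l z = - (Psi11 p c0 c1 c2 l z * Psi11 p c0 c1 c2 l z) - Psi12 p c0 c1 c2 l z * Psi21 p c0 c1 c2 l z"

definition esym :: "nat \<Rightarrow> complex list \<Rightarrow> complex" where
  "esym k xs = (\<Sum>S\<in>{S. S \<subseteq> {..<length xs} \<and> card S = k}. \<Prod>i\<in>S. xs ! i)"

definition nu1 :: "(real \<times> real \<Rightarrow> complex) \<Rightarrow> real \<times> real \<Rightarrow> complex" where
  "nu1 p z = abs2 (p z)"

definition nu2 :: "(real \<times> real \<Rightarrow> complex) \<Rightarrow> real \<times> real \<Rightarrow> complex" where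
  "nu2 p z = \<i> * (cnj (p z) * px p z - p z * px (\<lambda>w. cnj (p w)) z)"

end

theory Submission
  imports Defs
begin

text \<open>At the given point, Psi12 = i p (l - mu1)(l - mu2), Psi21(l) = - cnj (Psi12 (cnj l)) and
  Psi11 = - i T(l), where T is a monic cubic whose coefficients involve only c0, c1, c2, nu1, nu2.
  Hence R = T^2 + nu1 M with M the quartic whose roots are mu1, mu2, cnj mu1, cnj mu2.
  Comparing coefficients of l^5 and l^4 expresses c2 and c1 through Lambda1, Lambda2; the linear
  coefficient of Psi12 gives Sigma1 = - 2 c2 - nu2/(2 nu1); the l^3 coefficient then fixes c0, and
  the last three coefficients yield Sigma2, Sigma3, Sigma4.\<close>

lemma esym_0 [simp]: "esym 0 xs = 1"
proof -
  have "{S. S \<subseteq> {..<length xs} \<and> card S = 0} = {{}}"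
    by (auto dest: finite_subset)
  then show ?thesis by (simp add: esym_def)
qed

lemma esym_1: "esym 1 xs = sum_list xs"
proof -
  have "{S. S \<subseteq> {..<length xs} \<and> card S = 1} = (\<lambda>i. {i}) ` {..<length xs}"
    by (auto simp: card_1_singleton_iff)
  then have "esym 1 xs = (\<Sum>i<length xs. xs ! i)"
    by (simp add: esym_def sum.reindex)
  then show ?thesis by (simp add: sum_list_sum_nth atLeast0LessThan)
qed

lemma prod_diff_eq_sum_esym:
  fixes xs :: "complex list"
  shows "(\<Prod>i<length xs. l - xs!i) = (\<Sum>k\<le>length xs. (-1)^k * esym k xs * l^(length xs - k))"
proof -
  define n where "n = length xs"
  have "(\<Prod>i<n. l - xs!i) = (\<Prod>i\<in>{..<n}. (- xs!i) + l)" by simp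
  also have "\<dots> = (\<Sum>X\<in>Pow {..<n}. (\<Prod>i\<in>X. - xs!i) * (\<Prod>i\<in>{..<n}-X. l))"
    by (rule prod_add) simp
  also have "\<dots> = (\<Sum>X\<in>Pow {..<n}. (-1)^card X * (\<Prod>i\<in>X. xs!i) * l^(n - card X))"
  proof (rule sum.cong)
    fix X assume "X \<in> Pow {..<n}"
    then have "card ({..<n} - X) = n - card X"
      by (simp add: card_Diff_subset finite_subset)
    then show "(\<Prod>i\<in>X. - xs!i) * (\<Prod>i\<in>{..<n}-X. l) = (-1)^card X * (\<Prod>i\<in>X. xs!i) * l^(n - card X)"
      by (simp add: prod_uminus)
  qed simp
  also have "\<dots> = (\<Sum>k\<le>n. \<Sum>X\<in>{X. X \<in> Pow {..<n} \<and> card X = k}. (-1)^card X * (\<Prod>i\<in>X. xs!i) * l^(n - card X))"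
    by (rule sum.group[symmetric]) (auto intro: card_mono[of "{..<n}", simplified])
  also have "\<dots> = (\<Sum>k\<le>n. (-1)^k * esym k xs * l^(n-k))"
    by (rule sum.cong) (auto simp: esym_def n_def sum_distrib_left sum_distrib_right mult_ac intro: sum.cong)
  finally show ?thesis unfolding n_def .
qed

lemma esym_eqs_of_sextic_factorization:
  fixes lam ms :: "complex list" and b0 b1 b2 n :: complex
  assumes "length lam = 6" "length ms = 4"
    and factor: "\<And>l. (\<Prod>i<6. l - lam!i) = (l^3 + b2*l^2 + b1*l + b0)^2 + n * (\<Prod>i<4. l - ms!i)"
  shows "esym 1 lam = -2*b2" "esym 2 lam = b2^2 + 2*b1 + n"
    "esym 3 lam = n * esym 1 ms - 2*b0 - 2*b1*b2" "esym 4 lam = b1^2 + 2*b0*b2 + n * esym 2 ms"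
    "esym 5 lam = n * esym 3 ms - 2*b0*b1" "esym 6 lam = b0^2 + n * esym 4 ms"
proof -
  define L where "L k = esym k lam" for k
  define S where "S k = esym k ms" for k
  have "\<forall>l. (\<Sum>i\<le>6. [L 6, -L 5, L 4, -L 3, L 2, -L 1, 1] ! i * l^i)
      = (\<Sum>i\<le>6. [b0^2 + n * S 4, 2*b0*b1 - n * S 3, b1^2 + 2*b0*b2 + n * S 2,
                   2*b0 + 2*b1*b2 - n * S 1, b2^2 + 2*b1 + n, 2*b2, 1] ! i * l^i)" (is "\<forall>l. ?lhs l = ?rhs l")
  proof
    fix l :: complex
    have "?lhs l = (\<Prod>i<6. l - lam!i)"
      using prod_diff_eq_sum_esym[of l lam] assms(1) by (simp add: L_def numeral_eq_Suc atMost_Suc)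
    also have "\<dots> = (l^3 + b2*l^2 + b1*l + b0)^2 + n * (\<Prod>i<4. l - ms!i)"
      by (rule factor)
    also have "(\<Prod>i<4. l - ms!i) = l^4 - S 1 * l^3 + S 2 * l^2 - S 3 * l + S 4"
      using prod_diff_eq_sum_esym[of l ms] assms(2) by (simp add: S_def numeral_eq_Suc atMost_Suc)
    also have "(l^3 + b2*l^2 + b1*l + b0)^2 + n * (l^4 - S 1 * l^3 + S 2 * l^2 - S 3 * l + S 4) = ?rhs l"
      by (simp add: numeral_eq_Suc atMost_Suc) algebra
    finally show "?lhs l = ?rhs l" .
  qed
  then have coeff: "[L 6, -L 5, L 4, -L 3, L 2, -L 1, 1] ! i = [b0^2 + n * S 4, 2*b0*b1 - n * S 3,
      b1^2 + 2*b0*b2 + n * S 2, 2*b0 + 2*b1*b2 - n * S 1, b2^2 + 2*b1 + n, 2*b2, 1] ! i"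
    if "i \<le> 6" for i
    using that polyfun_eq_coeffs by blast
  show "esym 1 lam = -2*b2" "esym 2 lam = b2^2 + 2*b1 + n"
    "esym 3 lam = n * esym 1 ms - 2*b0 - 2*b1*b2" "esym 4 lam = b1^2 + 2*b0*b2 + n * esym 2 ms"
    "esym 5 lam = n * esym 3 ms - 2*b0*b1" "esym 6 lam = b0^2 + n * esym 4 ms"
    using coeff[of 0] coeff[of 1] coeff[of 2] coeff[of 3] coeff[of 4] coeff[of 5]
    by (simp_all add: L_def S_def minus_equation_iff[of "esym _ _"] diff_diff_eq)
qed

lemma symmetric_functions_from_coefficients:
  fixes n n2 b0 b1 b2 L1 L2 L3 L4 L5 L6 S1 S2 S3 S4 :: complex
  assumes n: "n \<noteq> 0"
    and S1: "S1 = -2*b2 - n2/(2*n)"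
    and L1: "L1 = -2*b2" and L2: "L2 = b2^2 + 2*b1 + n"
    and L3: "L3 = n*S1 - 2*b0 - 2*b1*b2" and L4: "L4 = b1^2 + 2*b0*b2 + n*S2"
    and L5: "L5 = n*S3 - 2*b0*b1" and L6: "L6 = b0^2 + n*S4"
  shows "S1 = -1/2 * n2/n + L1
    \<and> S2 = -1/4*L1*n2/n - 1/4*n
            + (-5/64*L1^4 + 3/8*L1^2*L2 - 1/4*L2^2 - 1/2*L1*L3 + L4)/n
            + 1/2*L2 + 1/8*L1^2
    \<and> S3 = 1/4*n2 + (1/16*L1^2 - 1/4*L2)*n2/n - 1/4*L1*n
            + (1/64*L1^5 - 1/8*L1^3*L2 + 1/8*L1^2*L3 + 1/4*L1*L2^2 - 1/2*L2*L3 + L5)/n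
            + 1/2*L3
    \<and> S4 = 1/8*L1*n2 - 1/16*n2^2/n - 1/16*L1^2*n
            + (-1/32*L1^3 + 1/8*L1*L2 - 1/4*L3)*n2/n
            + (-1/256*L1^6 + 1/32*L1^4*L2 - 1/16*L1^3*L3 - 1/16*L1^2*L2^2
               + 1/4*L1*L2*L3 - 1/4*L3^2 + L6)/n
            + 1/32*L1^4 - 1/8*L1^2*L2 + 1/4*L1*L3"
  unfolding L1 L2 L3 L4 L5 L6 S1 using n
  by (intro conjI; simp add: field_simps; algebra)

lemma smooth2_differentiable:
  assumes "smooth2 p"
  shows "p differentiable (at w)" "px p differentiable (at w)"
proof -
  have "iter_partial [] p differentiable (at w)" "iter_partial [False] p differentiable (at w)"
    using assms unfolding smooth2_def by blast+
  then show "p differentiable (at w)" "px p differentiable (at w)" by simp_all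
qed

lemma px_cnj:
  assumes "\<And>w. f differentiable (at w)"
  shows "px (\<lambda>w. cnj (f w)) z = cnj (px f z)"
proof -
  have "(f \<circ> (\<lambda>s. (s, snd z))) differentiable (at (fst z))"
    by (intro differentiable_chain_at derivative_intros assms)
  then show ?thesis
    unfolding px_def o_def by (rule vector_derivative_cnj)
qed

lemma Psi11_eq:
  "Psi11 p c0 c1 c2 l z
     = -\<i> * (l^3 + c2*l^2 + (c1 - nu1 p z/2)*l + (c0 - c2*nu1 p z/2 - nu2 p z/4))"
  unfolding Psi11_def nu1_def nu2_def by (simp add: field_simps power2_eq_square power3_eq_cube)

lemma nu1_eq: "nu1 p z = p z * cnj (p z)"
  unfolding nu1_def abs2_def by (rule complex_norm_square)

lemma Psi21_eq_cnj_Psi12: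
  assumes "\<And>w. p differentiable (at w)" "\<And>w. px p differentiable (at w)"
  shows "Psi21 p c0 c1 c2 l z = - cnj (Psi12 p c0 c1 c2 (cnj l) z)"
proof -
  have "px (\<lambda>w. cnj (p w)) = (\<lambda>w. cnj (px p w))"
    using px_cnj[OF assms(1)] by blast
  moreover have "cnj (abs2 (p z)) = abs2 (p z)"
    by (simp add: abs2_def)
  ultimately show ?thesis
    unfolding Psi21_def Psi12_def
    using px_cnj[OF assms(2), of z] by (simp add: field_simps power2_eq_square)
qed

lemma RR_eq_square_plus_nu1_prod:
  assumes "\<And>w. p differentiable (at w)" "\<And>w. px p differentiable (at w)"
    and dirichlet: "\<And>l. Psi12 p c0 c1 c2 l z = \<i> * p z * (l - mu1) * (l - mu2)"
  shows "RR p c0 c1 c2 l z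
     = (l^3 + c2*l^2 + (c1 - nu1 p z/2)*l + (c0 - c2*nu1 p z/2 - nu2 p z/4))^2
       + nu1 p z * (\<Prod>i<4. l - [mu1, mu2, cnj mu1, cnj mu2] ! i)"
proof -
  have Psi21: "Psi21 p c0 c1 c2 l z = \<i> * cnj (p z) * (l - cnj mu1) * (l - cnj mu2)"
    using Psi21_eq_cnj_Psi12[OF assms(1,2)] dirichlet[of "cnj l"] by simp
  show ?thesis
    unfolding RR_def Psi11_eq dirichlet Psi21 nu1_eq
    by (simp add: eval_nat_numeral lessThan_Suc algebra_simps power2_eq_square)
qed

lemma Dirichlet_esym_1:
  assumes "\<And>w. p differentiable (at w)" and nz: "p z \<noteq> 0"
    and dirichlet: "\<And>l. Psi12 p c0 c1 c2 l z = \<i> * p z * (l - mu1) * (l - mu2)"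
  shows "esym 1 [mu1, mu2, cnj mu1, cnj mu2] = -2*c2 - nu2 p z / (2 * nu1 p z)"
proof -
  define a u where "a = p z" and "u = px p z"
  have "-2*\<i>*a*(mu1 + mu2) = Psi12 p c0 c1 c2 1 z - Psi12 p c0 c1 c2 (-1) z"
    unfolding dirichlet a_def by algebra
  also have "\<dots> = -u + 2*\<i>*c2*a"
    unfolding Psi12_def a_def u_def by (simp add: algebra_simps)
  finally have sum: "mu1 + mu2 = -c2 - \<i>*u/(2*a)"
    using nz unfolding a_def by (simp add: field_simps)
  have "cnj mu1 + cnj mu2 = -c2 + \<i>*cnj u/(2*cnj a)"
    using arg_cong[OF sum, of cnj] by simp
  moreover have "nu2 p z / (2 * nu1 p z) = \<i>*u/(2*a) - \<i>*cnj u/(2*cnj a)"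
    unfolding nu2_def nu1_eq px_cnj[OF assms(1)] a_def[symmetric] u_def[symmetric]
    using nz unfolding a_def by (simp add: field_simps)
  moreover have "esym 1 [mu1, mu2, cnj mu1, cnj mu2] = (mu1 + mu2) + (cnj mu1 + cnj mu2)"
    unfolding esym_1 by simp
  ultimately show ?thesis
    using sum by simp
qed

theorem mainTheorem8:
  fixes p :: "real \<times> real \<Rightarrow> complex" and c0 c1 c2 :: real
    and z :: "real \<times> real" and lam :: "complex list" and mu1 mu2 :: complex
  assumes smooth: "smooth2 p"
    and nls: "is_NLS p"
    and twophase: "two_phase_with p c0 c1 c2"
    and nz: "p z \<noteq> 0"
    and roots: "length lam = 6" "\<forall>l. RR p c0 c1 c2 l z = (\<Prod>i<6. l - lam ! i)"
    and dirichlet: "\<forall>l. Psi12 p c0 c1 c2 l z = \<i> * p z * (l - mu1) * (l - mu2)"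
  defines "L1 \<equiv> esym 1 lam" and "L2 \<equiv> esym 2 lam" and "L3 \<equiv> esym 3 lam"
    and "L4 \<equiv> esym 4 lam" and "L5 \<equiv> esym 5 lam" and "L6 \<equiv> esym 6 lam"
    and "S1 \<equiv> esym 1 [mu1, mu2, cnj mu1, cnj mu2]"
    and "S2 \<equiv> esym 2 [mu1, mu2, cnj mu1, cnj mu2]"
    and "S3 \<equiv> esym 3 [mu1, mu2, cnj mu1, cnj mu2]"
    and "S4 \<equiv> esym 4 [mu1, mu2, cnj mu1, cnj mu2]"
    and "n1 \<equiv> nu1 p z" and "n2 \<equiv> nu2 p z"
  shows "S1 = -1/2 * n2/n1 + L1
    \<and> S2 = -1/4*L1*n2/n1 - 1/4*n1
            + (-5/64*L1^4 + 3/8*L1^2*L2 - 1/4*L2^2 - 1/2*L1*L3 + L4)/n1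
            + 1/2*L2 + 1/8*L1^2
    \<and> S3 = 1/4*n2 + (1/16*L1^2 - 1/4*L2)*n2/n1 - 1/4*L1*n1
            + (1/64*L1^5 - 1/8*L1^3*L2 + 1/8*L1^2*L3 + 1/4*L1*L2^2 - 1/2*L2*L3 + L5)/n1
            + 1/2*L3
    \<and> S4 = 1/8*L1*n2 - 1/16*n2^2/n1 - 1/16*L1^2*n1
            + (-1/32*L1^3 + 1/8*L1*L2 - 1/4*L3)*n2/n1
            + (-1/256*L1^6 + 1/32*L1^4*L2 - 1/16*L1^3*L3 - 1/16*L1^2*L2^2
               + 1/4*L1*L2*L3 - 1/4*L3^2 + L6)/n1
            + 1/32*L1^4 - 1/8*L1^2*L2 + 1/4*L1*L3"
proof -
  have dp: "\<And>w. p differentiable (at w)" and dpx: "\<And>w. px p differentiable (at w)"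
    using smooth2_differentiable[OF smooth] by blast+
  have length_4: "length [mu1, mu2, cnj mu1, cnj mu2] = 4" by simp
  have n1: "n1 \<noteq> 0"
    unfolding n1_def nu1_eq using nz by simp
  have "(\<Prod>i<6. l - lam!i) = (l^3 + c2*l^2 + (c1 - n1/2)*l + (c0 - c2*n1/2 - n2/4))^2
      + n1 * (\<Prod>i<4. l - [mu1, mu2, cnj mu1, cnj mu2] ! i)" for l :: complex
    using roots(2) RR_eq_square_plus_nu1_prod[OF dp dpx dirichlet[rule_format]]
    unfolding n1_def n2_def by simp
  note coeffs = esym_eqs_of_sextic_factorization[OF roots(1) length_4 this,
      folded L1_def L2_def L3_def L4_def L5_def L6_def S1_def S2_def S3_def S4_def]
  have "S1 = -2 * complex_of_real c2 - n2/(2*n1)"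
    unfolding S1_def n1_def n2_def using Dirichlet_esym_1[OF dp nz dirichlet[rule_format]] by simp
  from symmetric_functions_from_coefficients[OF n1 this coeffs] show ?thesis .
qed

end
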